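(* Let $F$ be an Archimedean vector lattice and $E$ a regular sublattice of $F$. Then the order adherence $\overline{E}^{1}_{o}$ of $E$ is a regular sublattice of $F$ in which $E$ is order dense, and every regular sublattice $H$ of $F$ in which $E$ is order dense satisfies $H\subset\overline{E}^{1}_{o}$.
   Context: A net order converges to $f$ if there is a set $G$ with $\bigwedge G=0$ such that for each $g\in G$ the net is eventually in $[f-g,f+g]$. The order adherence $\overline{E}^1_o$ is the set of order limits (in $F$) of nets in $E$. A sublattice $E\subset F$ is regular if for every $G\subset E$ with $\bigwedge_E G=0$ one has $\bigwedge_F G=0$. $E$ is order dense in a sublattice $H\supset E$ if for every $h\in H$ with $h>0$ there is $e\in E$ with $0<e\le h$. *)

theory Defs
  imports "HOL-Analysis.Analysis"
begin

definition archimedean_vl :: "'a::{ordered_real_vector, lattice} itself \<Rightarrow> bool" where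
  "archimedean_vl _ \<longleftrightarrow>
     (\<forall>x y :: 'a. 0 \<le> x \<and> 0 \<le> y \<and> (\<forall>n::nat. of_nat n *\<^sub>R x \<le> y) \<longrightarrow> x = 0)"

definition is_inf_in :: "'a::order set \<Rightarrow> 'a set \<Rightarrow> 'a \<Rightarrow> bool" where
  "is_inf_in A G m \<longleftrightarrow> m \<in> A \<and> (\<forall>g\<in>G. m \<le> g) \<and> (\<forall>a\<in>A. (\<forall>g\<in>G. a \<le> g) \<longrightarrow> a \<le> m)"

definition vl_sublattice :: "'a::{ordered_real_vector, lattice} set \<Rightarrow> bool" where
  "vl_sublattice E \<longleftrightarrow> subspace E \<and> (\<forall>x\<in>E. \<forall>y\<in>E. sup x y \<in> E \<and> inf x y \<in> E)"

definition regular_sublattice :: "'a::{ordered_real_vector, lattice} set \<Rightarrow> bool" where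
  "regular_sublattice E \<longleftrightarrow> vl_sublattice E \<and>
     (\<forall>G. G \<subseteq> E \<longrightarrow> is_inf_in E G 0 \<longrightarrow> is_inf_in UNIV G 0)"

text \<open>Order convergence of a net, nets being represented (as usual in Isabelle) by
  proper filters: the net is eventually in [f-g, f+g] for each g in G, where inf G = 0 in F.\<close>
definition order_converges :: "'a::{ordered_real_vector, lattice} filter \<Rightarrow> 'a \<Rightarrow> bool" where
  "order_converges N f \<longleftrightarrow>
     (\<exists>G. is_inf_in UNIV G 0 \<and> (\<forall>g\<in>G. eventually (\<lambda>x. f - g \<le> x \<and> x \<le> f + g) N))"

definition order_adherence :: "'a::{ordered_real_vector, lattice} set \<Rightarrow> 'a set" where
  "order_adherence E = {f. \<exists>N. N \<noteq> bot \<and> eventually (\<lambda>x. x \<in> E) N \<and> order_converges N f}"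

definition order_dense_in :: "'a::{ordered_real_vector, lattice} set \<Rightarrow> 'a set \<Rightarrow> bool" where
  "order_dense_in E H \<longleftrightarrow> E \<subseteq> H \<and> (\<forall>h\<in>H. 0 < h \<longrightarrow> (\<exists>e\<in>E. 0 < e \<and> e \<le> h))"

end

theory Submission
  imports Defs "HOL-Library.Lattice_Algebras"
begin

(* The key fact is that a positive f in the order adherence of a regular sublattice E of an
  Archimedean F is the supremum in F of E \<inter> [0, f]: an upper bound of E \<inter> [0, f] dominates
  every element of E lying below the approximants of f, and regularity of E together with the
  Archimedean property passes this on to every lower bound f - k of those approximants.
  Order density of E in its adherence follows at once, and regularity of the adherence is
  reduced to regularity of E.  Conversely, if E is order dense in a regular sublattice H,
  every positive p in H is the supremum of the upward directed set E \<inter> [0, p], first in H by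
  the Archimedean property and then in F by regularity of H; so p is the order limit of that
  set viewed as a net. *)

lemma vector_lattice_lattice_ab_group_add:
  "class.lattice_ab_group_add (+) (0::'a::{ordered_real_vector, lattice}) (-) uminus (\<le>) (<) inf sup"
  by unfold_locales

lemma sup_plus_inf:
  fixes x y :: "'a::{ordered_real_vector, lattice}"
  shows "sup x y + inf x y = x + y"
  by (rule lattice_ab_group_add.add_eq_inf_sup[OF vector_lattice_lattice_ab_group_add, symmetric])

lemma sup_0_diff_sup_uminus_0:
  fixes h :: "'a::{ordered_real_vector, lattice}"
  shows "sup h 0 - sup (- h) 0 = h"
proof -
  have "- sup (- h) 0 = inf h 0"
    using lattice_ab_group_add.neg_sup_eq_inf[OF vector_lattice_lattice_ab_group_add, of "- h" 0]
    by simp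
  then show ?thesis
    using sup_plus_inf[of h 0] by (simp add: diff_conv_add_uminus)
qed

lemma sup_le_sup_add:
  fixes a b x y g :: "'a::{ordered_real_vector, lattice}"
  assumes "a \<le> x + g" and "b \<le> y + g"
  shows "sup a b \<le> sup x y + g"
  using assms by (meson add_right_mono order_trans sup_ge1 sup_ge2 sup_least)

lemma scaleR_between:
  fixes f g x :: "'a::ordered_real_vector"
  assumes "f - g \<le> x" and "x \<le> f + g"
  shows "c *\<^sub>R f - \<bar>c\<bar> *\<^sub>R g \<le> c *\<^sub>R x \<and> c *\<^sub>R x \<le> c *\<^sub>R f + \<bar>c\<bar> *\<^sub>R g"
proof (cases "0 \<le> c")
  case True
  then have "c *\<^sub>R (f - g) \<le> c *\<^sub>R x" "c *\<^sub>R x \<le> c *\<^sub>R (f + g)"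
    using assms by (auto intro: scaleR_left_mono)
  then show ?thesis using True by (simp add: scaleR_diff_right scaleR_add_right)
next
  case False
  then have "c *\<^sub>R x \<le> c *\<^sub>R (f - g)" "c *\<^sub>R (f + g) \<le> c *\<^sub>R x"
    using assms by (auto intro: scaleR_left_mono_neg)
  then show ?thesis using False by (simp add: scaleR_diff_right scaleR_add_right)
qed

lemma archimedean_vlD:
  fixes x y :: "'a::{ordered_real_vector, lattice}"
  assumes "archimedean_vl TYPE('a)" and "0 \<le> x" and "\<And>n::nat. of_nat n *\<^sub>R x \<le> y"
  shows "x = 0"
proof -
  have "0 \<le> y" using assms(3)[of 0] by simp
  then show ?thesis using assms unfolding archimedean_vl_def by blast
qed

lemma archimedean_vl_shift_bounded_eq_0:
  fixes e b :: "'a::{ordered_real_vector, lattice}"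
  assumes arch: "archimedean_vl TYPE('a)" and "0 \<le> e" and "a \<in> L"
    and shift: "\<And>l. l \<in> L \<Longrightarrow> l + e \<in> L" and bounded: "\<And>l. l \<in> L \<Longrightarrow> l \<le> b"
  shows "e = 0"
proof (rule archimedean_vlD[OF arch \<open>0 \<le> e\<close>])
  fix n :: nat
  have "a + of_nat m *\<^sub>R e \<in> L" for m :: nat
  proof (induction m)
    case 0
    show ?case using \<open>a \<in> L\<close> by simp
  next
    case (Suc m)
    then have "a + of_nat m *\<^sub>R e + e \<in> L" by (rule shift)
    then show ?case by (simp add: algebra_simps)
  qed
  then show "of_nat n *\<^sub>R e \<le> b - a"
    using bounded by (simp add: le_diff_eq add.commute)
qed

lemma is_inf_inI:
  assumes "m \<in> A" and "\<And>g. g \<in> G \<Longrightarrow> m \<le> g"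
    and "\<And>a. a \<in> A \<Longrightarrow> (\<And>g. g \<in> G \<Longrightarrow> a \<le> g) \<Longrightarrow> a \<le> m"
  shows "is_inf_in A G m"
  using assms unfolding is_inf_in_def by blast

lemma is_inf_in_lower: "is_inf_in A G m \<Longrightarrow> g \<in> G \<Longrightarrow> m \<le> g"
  unfolding is_inf_in_def by blast

lemma is_inf_in_greatest: "is_inf_in A G m \<Longrightarrow> a \<in> A \<Longrightarrow> (\<And>g. g \<in> G \<Longrightarrow> a \<le> g) \<Longrightarrow> a \<le> m"
  unfolding is_inf_in_def by blast

lemma is_inf_in_zero_sums:
  fixes G1 G2 :: "'a::ordered_ab_group_add set"
  assumes G1: "is_inf_in UNIV G1 0" and G2: "is_inf_in UNIV G2 0"
  shows "is_inf_in UNIV {g1 + g2 | g1 g2. g1 \<in> G1 \<and> g2 \<in> G2} 0"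
proof (rule is_inf_inI)
  fix z assume z: "\<And>g. g \<in> {g1 + g2 | g1 g2. g1 \<in> G1 \<and> g2 \<in> G2} \<Longrightarrow> z \<le> g"
  have "z \<le> g2" if "g2 \<in> G2" for g2
  proof -
    have "z - g2 \<le> 0"
      by (rule is_inf_in_greatest[OF G1 UNIV_I]) (use z that in \<open>force simp: diff_le_eq add.commute\<close>)
    then show ?thesis by simp
  qed
  then show "z \<le> 0"
    by (rule is_inf_in_greatest[OF G2 UNIV_I])
qed (use is_inf_in_lower[OF G1] is_inf_in_lower[OF G2] in auto)

lemma is_inf_in_zero_scaleR:
  fixes G :: "'a::ordered_real_vector set"
  assumes "0 < c" and G: "is_inf_in UNIV G 0"
  shows "is_inf_in UNIV ((*\<^sub>R) c ` G) 0"
proof (rule is_inf_inI)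
  fix z assume z: "\<And>g. g \<in> (*\<^sub>R) c ` G \<Longrightarrow> z \<le> g"
  have "(1 / c) *\<^sub>R z \<le> g" if "g \<in> G" for g
    using scaleR_left_mono[OF z[of "c *\<^sub>R g"], of "1 / c"] that \<open>0 < c\<close> by simp
  then have "(1 / c) *\<^sub>R z \<le> 0"
    by (rule is_inf_in_greatest[OF G UNIV_I])
  then show "z \<le> 0"
    using \<open>0 < c\<close> by (simp add: scaleR_le_0_iff)
qed (use is_inf_in_lower[OF G] \<open>0 < c\<close> in \<open>auto intro: scaleR_nonneg_nonneg\<close>)

lemma order_adherenceI:
  assumes "N \<noteq> bot" and "eventually (\<lambda>x. x \<in> E) N" and "is_inf_in UNIV G 0"
    and "\<And>g. g \<in> G \<Longrightarrow> eventually (\<lambda>x. f - g \<le> x \<and> x \<le> f + g) N"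
  shows "f \<in> order_adherence E"
  using assms unfolding order_adherence_def order_converges_def by blast

lemma order_adherenceE:
  assumes "f \<in> order_adherence E"
  obtains N G where "N \<noteq> bot" and "eventually (\<lambda>x. x \<in> E) N" and "is_inf_in UNIV G 0"
    and "\<And>g. g \<in> G \<Longrightarrow> eventually (\<lambda>x. f - g \<le> x \<and> x \<le> f + g) N"
  using assms unfolding order_adherence_def order_converges_def by blast

lemma subset_order_adherence: "E \<subseteq> order_adherence E"
proof
  fix e assume "e \<in> E"
  show "e \<in> order_adherence E"
    by (rule order_adherenceI[of "principal {e}" _ "{0}"])
      (use \<open>e \<in> E\<close> in \<open>auto simp: eventually_principal principal_eq_bot_iff is_inf_in_def\<close>)
qed

lemma order_adherence_binop:
  fixes E :: "'a::{ordered_real_vector, lattice} set"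
  assumes f1: "f1 \<in> order_adherence E" and f2: "f2 \<in> order_adherence E"
    and closed: "\<And>x y. x \<in> E \<Longrightarrow> y \<in> E \<Longrightarrow> op x y \<in> E"
    and "0 < C"
    and bound: "\<And>x y g1 g2. 0 \<le> g1 \<Longrightarrow> 0 \<le> g2 \<Longrightarrow> f1 - g1 \<le> x \<Longrightarrow> x \<le> f1 + g1
       \<Longrightarrow> f2 - g2 \<le> y \<Longrightarrow> y \<le> f2 + g2
       \<Longrightarrow> op f1 f2 - C *\<^sub>R (g1 + g2) \<le> op x y \<and> op x y \<le> op f1 f2 + C *\<^sub>R (g1 + g2)"
  shows "op f1 f2 \<in> order_adherence E"
proof -
  obtain N1 G1 where N1: "N1 \<noteq> bot" "eventually (\<lambda>x. x \<in> E) N1" "is_inf_in UNIV G1 0"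
    and ev1: "\<And>g. g \<in> G1 \<Longrightarrow> eventually (\<lambda>x. f1 - g \<le> x \<and> x \<le> f1 + g) N1"
    using f1 by (metis order_adherenceE)
  obtain N2 G2 where N2: "N2 \<noteq> bot" "eventually (\<lambda>x. x \<in> E) N2" "is_inf_in UNIV G2 0"
    and ev2: "\<And>g. g \<in> G2 \<Longrightarrow> eventually (\<lambda>x. f2 - g \<le> x \<and> x \<le> f2 + g) N2"
    using f2 by (metis order_adherenceE)
  let ?N = "filtermap (\<lambda>(x, y). op x y) (N1 \<times>\<^sub>F N2)"
  let ?G = "(*\<^sub>R) C ` {g1 + g2 | g1 g2. g1 \<in> G1 \<and> g2 \<in> G2}"
  show ?thesis
  proof (rule order_adherenceI[of ?N _ ?G])
    show "?N \<noteq> bot"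
      using N1(1) N2(1) by (simp add: prod_filter_eq_bot filtermap_bot_iff)
    show "eventually (\<lambda>x. x \<in> E) ?N"
      unfolding eventually_filtermap
      by (rule eventually_mono[OF eventually_prodI[OF N1(2) N2(2)]]) (auto intro: closed)
    show "is_inf_in UNIV ?G 0"
      by (intro is_inf_in_zero_scaleR is_inf_in_zero_sums N1(3) N2(3) \<open>0 < C\<close>)
  next
    fix g assume "g \<in> ?G"
    then obtain g1 g2 where g: "g = C *\<^sub>R (g1 + g2)" "g1 \<in> G1" "g2 \<in> G2" by blast
    have "0 \<le> g1" "0 \<le> g2"
      using is_inf_in_lower[OF N1(3) g(2)] is_inf_in_lower[OF N2(3) g(3)] by auto
    show "eventually (\<lambda>x. op f1 f2 - g \<le> x \<and> x \<le> op f1 f2 + g) ?N"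
      unfolding eventually_filtermap
      by (rule eventually_mono[OF eventually_prodI[OF ev1[OF g(2)] ev2[OF g(3)]]])
        (use bound[OF \<open>0 \<le> g1\<close> \<open>0 \<le> g2\<close>] g(1) in auto)
  qed
qed

lemma order_adherence_add:
  fixes E :: "'a::{ordered_real_vector, lattice} set"
  assumes "subspace E" and "x \<in> order_adherence E" and "y \<in> order_adherence E"
  shows "x + y \<in> order_adherence E"
proof (rule order_adherence_binop[OF assms(2,3), of "(+)" 1])
  fix a b g1 g2 :: 'a
  assume "x - g1 \<le> a" "a \<le> x + g1" "y - g2 \<le> b" "b \<le> y + g2"
  then have "(x - g1) + (y - g2) \<le> a + b" "a + b \<le> (x + g1) + (y + g2)"
    by (auto intro: add_mono)
  then show "x + y - 1 *\<^sub>R (g1 + g2) \<le> a + b \<and> a + b \<le> x + y + 1 *\<^sub>R (g1 + g2)"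
    by (simp_all add: algebra_simps)
qed (use \<open>subspace E\<close> subspace_add in auto)

lemma order_adherence_scaleR:
  fixes E :: "'a::{ordered_real_vector, lattice} set"
  assumes "subspace E" and x: "x \<in> order_adherence E"
  shows "c *\<^sub>R x \<in> order_adherence E"
proof (rule order_adherence_binop[OF x x, of "\<lambda>a b. c *\<^sub>R a" "\<bar>c\<bar> + 1"])
  fix a b g1 g2 :: 'a
  assume "0 \<le> g1" "0 \<le> g2" "x - g1 \<le> a" "a \<le> x + g1"
  moreover have "\<bar>c\<bar> *\<^sub>R g1 \<le> (\<bar>c\<bar> + 1) *\<^sub>R (g1 + g2)"
    using \<open>0 \<le> g1\<close> \<open>0 \<le> g2\<close> by (simp add: algebra_simps add_nonneg_nonneg scaleR_nonneg_nonneg)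
  ultimately show "c *\<^sub>R x - (\<bar>c\<bar> + 1) *\<^sub>R (g1 + g2) \<le> c *\<^sub>R a
      \<and> c *\<^sub>R a \<le> c *\<^sub>R x + (\<bar>c\<bar> + 1) *\<^sub>R (g1 + g2)"
    using scaleR_between[of x g1 a c] by (meson add_left_mono diff_left_mono order_trans)
qed (use \<open>subspace E\<close> subspace_scale in auto)

lemma order_adherence_sup:
  fixes E :: "'a::{ordered_real_vector, lattice} set"
  assumes "\<And>a b. a \<in> E \<Longrightarrow> b \<in> E \<Longrightarrow> sup a b \<in> E"
    and "x \<in> order_adherence E" and "y \<in> order_adherence E"
  shows "sup x y \<in> order_adherence E"
proof (rule order_adherence_binop[OF assms(2,3), of sup 1])
  fix a b g1 g2 :: 'a
  assume "0 \<le> g1" "0 \<le> g2" "x - g1 \<le> a" "a \<le> x + g1" "y - g2 \<le> b" "b \<le> y + g2"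
  then have "a \<le> x + (g1 + g2)" "b \<le> y + (g1 + g2)" "x \<le> a + (g1 + g2)" "y \<le> b + (g1 + g2)"
    by (auto simp: diff_le_eq add_increasing2 add.assoc intro: order_trans)
  then have "sup x y \<le> sup a b + (g1 + g2)" "sup a b \<le> sup x y + (g1 + g2)"
    by (blast intro: sup_le_sup_add)+
  then show "sup x y - 1 *\<^sub>R (g1 + g2) \<le> sup a b \<and> sup a b \<le> sup x y + 1 *\<^sub>R (g1 + g2)"
    unfolding scaleR_one diff_le_eq by blast
qed (use assms(1) in auto)

lemma vl_sublattice_order_adherence:
  fixes E :: "'a::{ordered_real_vector, lattice} set"
  assumes "vl_sublattice E"
  shows "vl_sublattice (order_adherence E)"
proof -
  have sE: "subspace E" and lE: "\<And>x y. x \<in> E \<Longrightarrow> y \<in> E \<Longrightarrow> sup x y \<in> E"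
    using assms unfolding vl_sublattice_def by auto
  have sA: "subspace (order_adherence E)"
    unfolding subspace_def using subset_order_adherence subspace_0[OF sE]
      order_adherence_add[OF sE] order_adherence_scaleR[OF sE] by blast
  moreover have "inf x y \<in> order_adherence E"
    if "x \<in> order_adherence E" "y \<in> order_adherence E" for x y
  proof -
    have "inf x y = x + y - sup x y"
      using sup_plus_inf[of x y] by (simp add: algebra_simps)
    then show ?thesis
      using subspace_diff[OF sA] subspace_add[OF sA] order_adherence_sup[OF lE] that by metis
  qed
  ultimately show ?thesis
    unfolding vl_sublattice_def using order_adherence_sup[OF lE] by blast
qed

lemma is_inf_in_diff_lower_bounds:
  fixes E :: "'a::{ordered_real_vector, lattice} set"
  assumes arch: "archimedean_vl TYPE('a)" and "vl_sublattice E"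
    and "x0 \<in> X" and "l0 \<in> E" and "\<And>x. x \<in> X \<Longrightarrow> l0 \<le> x"
  shows "is_inf_in E {x - l | x l. x \<in> X \<and> l \<in> E \<and> (\<forall>x'\<in>X. l \<le> x')} 0"
proof -
  have sE: "subspace E" and lE: "\<And>x y. x \<in> E \<Longrightarrow> y \<in> E \<Longrightarrow> sup x y \<in> E"
    using \<open>vl_sublattice E\<close> unfolding vl_sublattice_def by auto
  define L where "L = {l \<in> E. \<forall>x\<in>X. l \<le> x}"
  have "is_inf_in E {x - l | x l. x \<in> X \<and> l \<in> L} 0"
  proof (rule is_inf_inI)
    show "0 \<in> E" using sE by (simp add: subspace_0)
    fix m assume "m \<in> E" and m: "\<And>y. y \<in> {x - l | x l. x \<in> X \<and> l \<in> L} \<Longrightarrow> m \<le> y"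
    have "sup m 0 \<le> x - l" if "x \<in> X" "l \<in> L" for x l
      using m[of "x - l"] that L_def by auto
    moreover have "l + sup m 0 \<in> E" if "l \<in> L" for l
      using that \<open>m \<in> E\<close> \<open>0 \<in> E\<close> lE sE subspace_add unfolding L_def by blast
    ultimately have shift: "l + sup m 0 \<in> L" if "l \<in> L" for l
      using that unfolding L_def by (auto simp: le_diff_eq add.commute)
    have "sup m 0 = 0"
      by (rule archimedean_vl_shift_bounded_eq_0[OF arch _ _ shift, where a = l0 and b = x0])
        (use assms(3-5) L_def in auto)
    then show "m \<le> 0" by (metis sup.cobounded1)
  qed (auto simp: L_def)
  then show ?thesis by (simp add: L_def)
qed

lemma regular_sublattice_lower_bound_le:
  fixes E :: "'a::{ordered_real_vector, lattice} set"
  assumes arch: "archimedean_vl TYPE('a)" and reg: "regular_sublattice E"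
    and "X \<subseteq> E" and "x0 \<in> X" and "l0 \<in> E" and "\<And>x. x \<in> X \<Longrightarrow> l0 \<le> x"
    and bound: "\<And>l. l \<in> E \<Longrightarrow> (\<forall>x\<in>X. l \<le> x) \<Longrightarrow> l \<le> u"
    and lower: "\<And>x. x \<in> X \<Longrightarrow> c \<le> x"
  shows "c \<le> u"
proof -
  have vE: "vl_sublattice E" and sE: "subspace E"
    and rE: "\<And>G. G \<subseteq> E \<Longrightarrow> is_inf_in E G 0 \<Longrightarrow> is_inf_in UNIV G 0"
    using reg unfolding regular_sublattice_def vl_sublattice_def by auto
  let ?Y = "{x - l | x l. x \<in> X \<and> l \<in> E \<and> (\<forall>x'\<in>X. l \<le> x')}"
  have "?Y \<subseteq> E" using \<open>X \<subseteq> E\<close> sE subspace_diff by blast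
  then have Y: "is_inf_in UNIV ?Y 0"
    by (rule rE) (rule is_inf_in_diff_lower_bounds[OF arch vE assms(4-6)])
  have "c - u \<le> 0"
  proof (rule is_inf_in_greatest[OF Y UNIV_I])
    fix y assume "y \<in> ?Y"
    then obtain x l where "y = x - l" "x \<in> X" "l \<in> E" "\<forall>x'\<in>X. l \<le> x'" by blast
    then show "c - u \<le> y" using lower bound by (simp add: diff_mono)
  qed
  then show ?thesis by simp
qed

lemma order_adherence_le_upper_bound:
  fixes E :: "'a::{ordered_real_vector, lattice} set"
  assumes arch: "archimedean_vl TYPE('a)" and reg: "regular_sublattice E"
    and f: "f \<in> order_adherence E" and "0 \<le> f"
    and upper: "\<And>e. e \<in> E \<Longrightarrow> 0 \<le> e \<Longrightarrow> e \<le> f \<Longrightarrow> e \<le> u"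
  shows "f \<le> u"
proof -
  have E0: "0 \<in> E" and lE: "\<And>x. x \<in> E \<Longrightarrow> sup x 0 \<in> E"
    using reg subspace_0 unfolding regular_sublattice_def vl_sublattice_def by auto
  obtain N G where N: "N \<noteq> bot" "eventually (\<lambda>x. x \<in> E) N" and G: "is_inf_in UNIV G 0"
    and ev: "\<And>g. g \<in> G \<Longrightarrow> eventually (\<lambda>x. f - g \<le> x \<and> x \<le> f + g) N"
    using f by (metis order_adherenceE)
  have "f - u \<le> k" if "k \<in> G" for k
  proof -
    define X where "X = {x \<in> E. 0 \<le> x \<and> f - k \<le> x}"
    have approx: "\<exists>x\<in>X. x \<le> f + k'" if "k' \<in> G" for k'
    proof -
      obtain x where "x \<in> E" "f - k \<le> x" "x \<le> f + k'"
        using eventually_happens'[OF N(1) eventually_conj[OF N(2) eventually_conj[OF ev[OF \<open>k \<in> G\<close>] ev[OF \<open>k' \<in> G\<close>]]]]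
        by blast
      then show ?thesis
        using lE \<open>0 \<le> f\<close> is_inf_in_lower[OF G \<open>k' \<in> G\<close>]
        by (intro bexI[of _ "sup x 0"]) (auto simp: X_def intro: le_supI1 add_nonneg_nonneg)
    qed
    then obtain x0 where "x0 \<in> X" using \<open>k \<in> G\<close> by blast
    have "f - k \<le> u"
    proof (rule regular_sublattice_lower_bound_le[OF arch reg _ \<open>x0 \<in> X\<close> E0])
      fix l assume "l \<in> E" and "\<forall>x\<in>X. l \<le> x"
      have "l - f \<le> k'" if "k' \<in> G" for k'
      proof -
        obtain x where "x \<in> X" "x \<le> f + k'" using approx \<open>k' \<in> G\<close> by blast
        then show ?thesis using \<open>\<forall>x\<in>X. l \<le> x\<close> by (auto simp: diff_le_eq add.commute)
      qed
      then have "l - f \<le> 0" by (rule is_inf_in_greatest[OF G UNIV_I])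
      then have "sup l 0 \<le> u"
        using upper[of "sup l 0"] lE[OF \<open>l \<in> E\<close>] \<open>0 \<le> f\<close> by simp
      then show "l \<le> u" by simp
    qed (auto simp: X_def)
    then show ?thesis by (simp add: algebra_simps)
  qed
  then have "f - u \<le> 0" by (rule is_inf_in_greatest[OF G UNIV_I])
  then show "f \<le> u" by simp
qed

lemma order_dense_in_order_adherence:
  fixes E :: "'a::{ordered_real_vector, lattice} set"
  assumes "archimedean_vl TYPE('a)" and "regular_sublattice E"
  shows "order_dense_in E (order_adherence E)"
  unfolding order_dense_in_def
proof (intro conjI ballI impI subset_order_adherence)
  fix h assume h: "h \<in> order_adherence E" and "0 < h"
  show "\<exists>e\<in>E. 0 < e \<and> e \<le> h"
  proof (rule ccontr)
    assume "\<not> (\<exists>e\<in>E. 0 < e \<and> e \<le> h)"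
    then have "h \<le> 0"
      using order_adherence_le_upper_bound[OF assms h] \<open>0 < h\<close> by (force simp: order.order_iff_strict)
    then show False using \<open>0 < h\<close> by simp
  qed
qed

lemma is_inf_in_majorants_of_truncations:
  fixes E :: "'a::{ordered_real_vector, lattice} set"
  assumes arch: "archimedean_vl TYPE('a)" and reg: "regular_sublattice E"
    and GA: "G \<subseteq> order_adherence E" and G: "is_inf_in (order_adherence E) G 0"
    and "d \<in> E" and "0 \<le> d"
  shows "is_inf_in E {u \<in> E. \<exists>g\<in>G. inf g d \<le> u} 0"
proof (rule is_inf_inI)
  have sE: "subspace E" and vE: "vl_sublattice E"
    using reg unfolding regular_sublattice_def vl_sublattice_def by auto
  then show "0 \<in> E" by (simp add: subspace_0)
  fix m assume "m \<in> E" and m: "\<And>u. u \<in> {u \<in> E. \<exists>g\<in>G. inf g d \<le> u} \<Longrightarrow> m \<le> u"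
  have "m \<in> order_adherence E" using \<open>m \<in> E\<close> subset_order_adherence by blast
  moreover have "m \<le> g" if "g \<in> G" for g
  proof -
    have "d - inf g d \<in> order_adherence E"
      using vl_sublattice_order_adherence[OF vE] GA that \<open>d \<in> E\<close> subset_order_adherence
        subspace_diff unfolding vl_sublattice_def by blast
    then have "d - inf g d \<le> d - m"
    proof (rule order_adherence_le_upper_bound[OF arch reg])
      fix e assume "e \<in> E" "e \<le> d - inf g d"
      then have "m \<le> d - e"
        using \<open>g \<in> G\<close> \<open>d \<in> E\<close> sE subspace_diff by (intro m) (auto simp: le_diff_eq add.commute)
      then show "e \<le> d - m" by (simp add: le_diff_eq add.commute)
    qed simp
    then show "m \<le> g" by (simp add: le_diff_eq le_inf_iff)
  qed
  ultimately show "m \<le> 0" by (rule is_inf_in_greatest[OF G])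
next
  fix u assume "u \<in> {u \<in> E. \<exists>g\<in>G. inf g d \<le> u}"
  then obtain g where "g \<in> G" "inf g d \<le> u" by blast
  then show "0 \<le> u"
    using is_inf_in_lower[OF G \<open>g \<in> G\<close>] \<open>0 \<le> d\<close> by (meson le_inf_iff order_trans)
qed

lemma order_adherence_lower_bound_inf_le_0:
  fixes E :: "'a::{ordered_real_vector, lattice} set"
  assumes arch: "archimedean_vl TYPE('a)" and reg: "regular_sublattice E"
    and GA: "G \<subseteq> order_adherence E" and G: "is_inf_in (order_adherence E) G 0"
    and "d \<in> E" and "0 \<le> d" and lower: "\<And>g. g \<in> G \<Longrightarrow> a \<le> g"
  shows "inf a d \<le> 0"
proof -
  have rE: "\<And>U. U \<subseteq> E \<Longrightarrow> is_inf_in E U 0 \<Longrightarrow> is_inf_in UNIV U 0"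
    using reg unfolding regular_sublattice_def by auto
  have "is_inf_in UNIV {u \<in> E. \<exists>g\<in>G. inf g d \<le> u} 0"
    by (rule rE) (auto intro: is_inf_in_majorants_of_truncations[OF assms(1-6)])
  then show ?thesis
  proof (rule is_inf_in_greatest[OF _ UNIV_I])
    fix u assume "u \<in> {u \<in> E. \<exists>g\<in>G. inf g d \<le> u}"
    then obtain g where "g \<in> G" "inf g d \<le> u" by blast
    then show "inf a d \<le> u" using lower[OF \<open>g \<in> G\<close>] by (meson inf_mono order_refl order_trans)
  qed
qed

lemma regular_sublattice_order_adherence:
  fixes E :: "'a::{ordered_real_vector, lattice} set"
  assumes arch: "archimedean_vl TYPE('a)" and reg: "regular_sublattice E"
  shows "regular_sublattice (order_adherence E)"
  unfolding regular_sublattice_def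
proof (intro conjI allI impI)
  have vE: "vl_sublattice E" and sE: "subspace E"
    and rE: "\<And>U. U \<subseteq> E \<Longrightarrow> is_inf_in E U 0 \<Longrightarrow> is_inf_in UNIV U 0"
    using reg unfolding regular_sublattice_def vl_sublattice_def by auto
  show "vl_sublattice (order_adherence E)" using vE by (rule vl_sublattice_order_adherence)
  fix G assume GA: "G \<subseteq> order_adherence E" and G: "is_inf_in (order_adherence E) G 0"
  show "is_inf_in UNIV G 0"
  proof (rule is_inf_inI)
    show "g \<in> G \<Longrightarrow> 0 \<le> g" for g by (rule is_inf_in_lower[OF G])
    fix a assume lower: "\<And>g. g \<in> G \<Longrightarrow> a \<le> g"
    show "a \<le> 0"
    proof (cases "G = {}")
      case True
      \<comment> \<open>0 is then the largest element of the adherence, hence of E; regularity of E,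
        applied to the empty set, makes it the largest element of F\<close>
      have "is_inf_in E {} 0"
        using G True sE subspace_0 subset_order_adherence by (auto simp: is_inf_in_def)
      then show ?thesis using rE[of "{}"] True by (simp add: is_inf_in_def)
    next
      case False
      then obtain g0 where "g0 \<in> G" by blast
      have a0_lower: "sup a 0 \<le> g" if "g \<in> G" for g
        using lower[OF that] is_inf_in_lower[OF G that] by simp
      have "g0 \<le> g0 - sup a 0"
      proof (rule order_adherence_le_upper_bound[OF arch reg])
        show "g0 \<in> order_adherence E" using GA \<open>g0 \<in> G\<close> by blast
        show "0 \<le> g0" by (rule is_inf_in_lower[OF G \<open>g0 \<in> G\<close>])
        fix e assume "e \<in> E" "0 \<le> e" "e \<le> g0"
        have "e + sup a 0 = sup e (sup a 0) + inf (sup a 0) e"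
          using sup_plus_inf[of e "sup a 0"] by (simp add: inf.commute)
        also have "\<dots> \<le> sup e (sup a 0)"
          using order_adherence_lower_bound_inf_le_0[OF arch reg GA G \<open>e \<in> E\<close> \<open>0 \<le> e\<close> a0_lower]
          by simp
        also have "\<dots> \<le> g0" using \<open>e \<le> g0\<close> a0_lower[OF \<open>g0 \<in> G\<close>] by simp
        finally show "e \<le> g0 - sup a 0" by (simp add: le_diff_eq)
      qed
      then show ?thesis by simp
    qed
  qed simp
qed

lemma is_inf_in_order_dense_diff:
  fixes E H :: "'a::{ordered_real_vector, lattice} set"
  assumes arch: "archimedean_vl TYPE('a)" and "subspace E" and "vl_sublattice H"
    and dense: "order_dense_in E H" and "p \<in> H" and "0 \<le> p"
  shows "is_inf_in H ((\<lambda>e. p - e) ` {e \<in> E. 0 \<le> e \<and> e \<le> p}) 0"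
proof (rule is_inf_inI)
  have sH: "subspace H" and lH: "\<And>x y. x \<in> H \<Longrightarrow> y \<in> H \<Longrightarrow> inf x y \<in> H"
    using \<open>vl_sublattice H\<close> unfolding vl_sublattice_def by auto
  then show "0 \<in> H" by (simp add: subspace_0)
  fix a assume "a \<in> H" and lower: "\<And>k. k \<in> (\<lambda>e. p - e) ` {e \<in> E. 0 \<le> e \<and> e \<le> p} \<Longrightarrow> a \<le> k"
  define w where "w = inf (p - a) p"
  have below_w: "e \<le> w" if "e \<in> E" "0 \<le> e" "e \<le> p" for e
    using lower[of "p - e"] that by (auto simp: w_def le_diff_eq add.commute)
  have "p - w \<in> H" using sH lH \<open>a \<in> H\<close> \<open>p \<in> H\<close> subspace_diff unfolding w_def by metis
  have "\<not> 0 < p - w"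
  proof
    assume "0 < p - w"
    then obtain e0 where "e0 \<in> E" "0 < e0" "e0 \<le> p - w"
      using dense \<open>p - w \<in> H\<close> unfolding order_dense_in_def by blast
    let ?D = "{e \<in> E. 0 \<le> e \<and> e \<le> p}"
    \<comment> \<open>?D lies below w, so it is invariant under translation by e0\<close>
    have shift: "e + e0 \<in> ?D" if "e \<in> ?D" for e
    proof -
      have "e + e0 \<le> w + (p - w)"
        by (rule add_mono[OF below_w \<open>e0 \<le> p - w\<close>]) (use that in auto)
      then show ?thesis
        using that \<open>e0 \<in> E\<close> \<open>0 < e0\<close> \<open>subspace E\<close> by (simp add: subspace_add add_nonneg_nonneg)
    qed
    have "0 \<in> ?D" using \<open>subspace E\<close> \<open>0 \<le> p\<close> by (simp add: subspace_0)
    have "e0 = 0"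
      by (rule archimedean_vl_shift_bounded_eq_0[OF arch _ \<open>0 \<in> ?D\<close> shift, where b = p])
        (use \<open>0 < e0\<close> in auto)
    then show False using \<open>0 < e0\<close> by simp
  qed
  moreover have "w \<le> p" by (simp add: w_def)
  ultimately have "p = w" by (simp add: less_le)
  then have "p \<le> p - a" unfolding w_def by (metis inf.cobounded1)
  then show "a \<le> 0" by simp
qed (auto)

lemma order_adherence_upward_directed:
  fixes D E :: "'a::{ordered_real_vector, lattice} set"
  assumes "D \<subseteq> E" and "d0 \<in> D" and sup_closed: "\<And>a b. a \<in> D \<Longrightarrow> b \<in> D \<Longrightarrow> sup a b \<in> D"
    and D: "is_inf_in UNIV ((\<lambda>d. p - d) ` D) 0"
  shows "p \<in> order_adherence E"
proof -
  let ?tail = "\<lambda>d. principal {e \<in> D. d \<le> e}"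
  have directed: "\<exists>c\<in>D. ?tail c \<le> inf (?tail a) (?tail b)" if "a \<in> D" "b \<in> D" for a b
    using that sup_closed by (intro bexI[of _ "sup a b"]) (auto simp: inf_principal)
  have eventually_tails: "eventually P (INF d\<in>D. ?tail d) \<longleftrightarrow> (\<exists>d\<in>D. \<forall>e\<in>D. d \<le> e \<longrightarrow> P e)" for P
    by (subst eventually_INF_base) (use \<open>d0 \<in> D\<close> directed in \<open>auto simp: eventually_principal\<close>)
  show ?thesis
  proof (rule order_adherenceI[of "INF d\<in>D. ?tail d" _ "(\<lambda>d. p - d) ` D"])
    show "(INF d\<in>D. ?tail d) \<noteq> bot"
      by (subst INF_filter_bot_base) (use directed in \<open>auto simp: principal_eq_bot_iff\<close>)
    show "eventually (\<lambda>x. x \<in> E) (INF d\<in>D. ?tail d)"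
      unfolding eventually_tails using \<open>d0 \<in> D\<close> \<open>D \<subseteq> E\<close> by blast
    show "is_inf_in UNIV ((\<lambda>d. p - d) ` D) 0" by (fact D)
  next
    fix g assume "g \<in> (\<lambda>d. p - d) ` D"
    then obtain d where "d \<in> D" "g = p - d" by blast
    have "e \<le> p" if "e \<in> D" for e
      using is_inf_in_lower[OF D, of "p - e"] that by simp
    then show "eventually (\<lambda>x. p - g \<le> x \<and> x \<le> p + g) (INF d\<in>D. ?tail d)"
      unfolding eventually_tails using \<open>d \<in> D\<close> \<open>g = p - d\<close>
      by (auto intro!: bexI[of _ d] add_increasing2 simp: le_diff_eq)
  qed
qed

lemma regular_order_dense_subset_order_adherence:
  fixes E H :: "'a::{ordered_real_vector, lattice} set"
  assumes arch: "archimedean_vl TYPE('a)" and reg: "regular_sublattice E"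
    and regH: "regular_sublattice H" and dense: "order_dense_in E H"
  shows "H \<subseteq> order_adherence E"
proof -
  have vE: "vl_sublattice E" and sE: "subspace E" and lE: "\<And>x y. x \<in> E \<Longrightarrow> y \<in> E \<Longrightarrow> sup x y \<in> E"
    using reg unfolding regular_sublattice_def vl_sublattice_def by auto
  have vH: "vl_sublattice H" and sH: "subspace H" and lH: "\<And>x. x \<in> H \<Longrightarrow> sup x 0 \<in> H"
    and rH: "\<And>G. G \<subseteq> H \<Longrightarrow> is_inf_in H G 0 \<Longrightarrow> is_inf_in UNIV G 0"
    using regH subspace_0 unfolding regular_sublattice_def vl_sublattice_def by auto
  have EH: "E \<subseteq> H" using dense unfolding order_dense_in_def by blast
  have positive: "p \<in> order_adherence E" if "p \<in> H" "0 \<le> p" for p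
  proof (rule order_adherence_upward_directed)
    let ?D = "{e \<in> E. 0 \<le> e \<and> e \<le> p}"
    show "?D \<subseteq> E" "0 \<in> ?D" using sE \<open>0 \<le> p\<close> by (auto simp: subspace_0)
    show "sup a b \<in> ?D" if "a \<in> ?D" "b \<in> ?D" for a b
      using that lE by (auto intro: le_supI1)
    show "is_inf_in UNIV ((\<lambda>e. p - e) ` ?D) 0"
    proof (rule rH)
      show "(\<lambda>e. p - e) ` ?D \<subseteq> H" using EH sH \<open>p \<in> H\<close> by (auto intro: subspace_diff)
      show "is_inf_in H ((\<lambda>e. p - e) ` ?D) 0"
        by (rule is_inf_in_order_dense_diff[OF arch sE vH dense that])
    qed
  qed
  show ?thesis
  proof
    fix h assume "h \<in> H"
    moreover have "- h \<in> H" using sH \<open>h \<in> H\<close> by (rule subspace_neg)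
    ultimately have "sup h 0 \<in> order_adherence E" "sup (- h) 0 \<in> order_adherence E"
      using positive lH by simp_all
    then have "sup h 0 - sup (- h) 0 \<in> order_adherence E"
      using vl_sublattice_order_adherence[OF vE] subspace_diff unfolding vl_sublattice_def by blast
    then show "h \<in> order_adherence E" by (simp add: sup_0_diff_sup_uminus_0)
  qed
qed

theorem theorem9p1:
  fixes E :: "'a::{ordered_real_vector, lattice} set"
  assumes "archimedean_vl TYPE('a)"
    and "regular_sublattice E"
  shows "regular_sublattice (order_adherence E)
    \<and> order_dense_in E (order_adherence E)
    \<and> (\<forall>H. regular_sublattice H \<and> order_dense_in E H \<longrightarrow> H \<subseteq> order_adherence E)"
  using regular_sublattice_order_adherence[OF assms] order_dense_in_order_adherence[OF assms]
    regular_order_dense_subset_order_adherence[OF assms] by blast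

end
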